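(* Let $a\ge1$ be an integer, $b>0$, $c\ge0$, $p\ge1$. There exists a constant $c_3>0$ depending only on $a,b,c,p$ such that for every $n\ge2$, \[ \frac{Z_{n,p}}{Z_{n-1,p}}\ge e^{-c_3 n}. \]
   Context: $\gamma_p=\Gamma(p/2)\Gamma(1/2)/(2\Gamma((p+1)/2))$. For $x\in\mathbb R^m$, $f_{a,b,c}(x)=\prod_{1\le i<j\le m}|x_i^a-x_j^a|^b\prod_{i=1}^m|x_i|^c$ and $Z_{m,p}=\int_{\mathbb R^m}e^{-abm\gamma_p\|x\|_p^p}f_{a,b,c}(x)\,dx$. *)

theory Defs
  imports "HOL-Analysis.Analysis"
begin

text \<open>Real power with the convention t^0 = 1 (Isabelle's powr has 0 powr 0 = 0).\<close>
definition rpow :: "real \<Rightarrow> real \<Rightarrow> real" where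
  "rpow t e = (if e = 0 then 1 else t powr e)"

definition gamma_p :: "real \<Rightarrow> real" where
  "gamma_p p = Gamma (p / 2) * Gamma (1 / 2) / (2 * Gamma ((p + 1) / 2))"

definition f_abc :: "nat \<Rightarrow> real \<Rightarrow> real \<Rightarrow> nat \<Rightarrow> (nat \<Rightarrow> real) \<Rightarrow> real" where
  "f_abc a b c m x =
     (\<Prod>i<m. \<Prod>j\<in>{i<..<m}. rpow \<bar>x i ^ a - x j ^ a\<bar> b) * (\<Prod>i<m. rpow \<bar>x i\<bar> c)"

definition Z :: "nat \<Rightarrow> real \<Rightarrow> real \<Rightarrow> nat \<Rightarrow> real \<Rightarrow> real" where
  "Z a b c m p =
     integral\<^sup>L (PiM {..<m} (\<lambda>_. lborel))
       (\<lambda>x. exp (- real a * b * real m * gamma_p p * (\<Sum>i<m. \<bar>x i\<bar> powr p)) * f_abc a b c m x)"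

end

theory Submission
  imports Defs "HOL-Probability.Sinc_Integral"
begin

text \<open>
  Write Z_m(\<beta>) for the integral of exp (-\<beta> \<Sum>|x_i|^p) f(x) over \<real>^m, so that Z_{m,p} = Z_m(\<alpha> m)
  with \<alpha> = a b \<gamma>_p. Two comparisons bound the ratio Z_n(\<alpha> n) / Z_{n-1}(\<alpha> (n-1)).
  First, the substitution x \<mapsto> ((n-1)/n)^(1/p) x turns the weight \<alpha> n into \<alpha> (n-1); since f is
  homogeneous of degree at most a b n^2 + c n, this costs a factor ((n-1)/n)^((n + a b n^2 + c n)/p),
  which is at least e^(-O(n)).
  Second, Z_{m+1}(\<beta>) \<ge> e^(-\<beta> 2^p - 10 b m) Z_m(\<beta>): integrate the last coordinate t only over [1,2].
  There each factor |x_i^a - t^a| dominates |t - u_i| for a suitable u_i, and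
  ln s \<ge> 2 (1 - s^(-1/2)) together with \<integral>_1^2 |t - u|^(-1/2) dt \<le> 5 and e^y \<ge> 1 + y bounds the
  integral of their product from below by e^(-10 b m).
  Finiteness of Z_m(\<beta>) comes from the polynomial growth of f, positivity from the second comparison.
\<close>

lemma rpow_borel_measurable [measurable]: "(\<lambda>t. rpow t e) \<in> borel_measurable borel"
  unfolding rpow_def by (cases "e = 0") auto

lemma f_abc_borel_measurable [measurable]:
  "f_abc a b c m \<in> borel_measurable (PiM {..<m} (\<lambda>_. lborel))"
  unfolding f_abc_def by measurable

lemma rpow_nonneg [simp]: "0 \<le> rpow t e"
  by (simp add: rpow_def)

lemma f_abc_nonneg: "0 \<le> f_abc a b c m x"
  unfolding f_abc_def by (intro mult_nonneg_nonneg prod_nonneg) auto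

lemma f_abc_cong: "(\<And>i. i < m \<Longrightarrow> x i = y i) \<Longrightarrow> f_abc a b c m x = f_abc a b c m y"
  unfolding f_abc_def by (intro arg_cong2[where f="(*)"] prod.cong refl) auto

lemma f_abc_fun_upd_Suc:
  "f_abc a b c (Suc m) (x(m := t)) = f_abc a b c m x * (\<Prod>i<m. rpow \<bar>x i ^ a - t ^ a\<bar> b) * rpow \<bar>t\<bar> c"
proof -
  have "{i<..<Suc m} = insert m {i<..<m}" if "i < m" for i
    using that by auto
  then have "(\<Prod>i<m. \<Prod>j\<in>{i<..<Suc m}. rpow \<bar>(x(m := t)) i ^ a - (x(m := t)) j ^ a\<bar> b)
      = (\<Prod>i<m. rpow \<bar>x i ^ a - t ^ a\<bar> b * (\<Prod>j\<in>{i<..<m}. rpow \<bar>x i ^ a - x j ^ a\<bar> b))"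
    by (intro prod.cong refl) (auto simp: prod.insert)
  then show ?thesis
    unfolding f_abc_def by (simp add: lessThan_Suc prod.distrib algebra_simps)
qed

definition Z_beta :: "nat \<Rightarrow> real \<Rightarrow> real \<Rightarrow> real \<Rightarrow> real \<Rightarrow> nat \<Rightarrow> ennreal" where
  "Z_beta a b c p \<beta> m = (\<integral>\<^sup>+x. ennreal (exp (-\<beta> * (\<Sum>i<m. \<bar>x i\<bar> powr p)) * f_abc a b c m x) \<partial>PiM {..<m} (\<lambda>_. lborel))"

lemma Z_eq_Z_beta: "Z a b c m p = enn2real (Z_beta a b c p (real a * b * gamma_p p * real m) m)"
proof -
  have "Z a b c m p = enn2real (\<integral>\<^sup>+x. ennreal (exp (- real a * b * real m * gamma_p p * (\<Sum>i<m. \<bar>x i\<bar> powr p)) * f_abc a b c m x) \<partial>PiM {..<m} (\<lambda>_. lborel))"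
    unfolding Z_def by (rule integral_eq_nn_integral) (measurable, simp add: f_abc_nonneg)
  then show ?thesis
    unfolding Z_beta_def by (simp add: mult_ac)
qed

section \<open>Rescaling the variables\<close>

lemma measurable_fun_upd_mult:
  "(\<lambda>(x, y). x(i := l * y)) \<in> PiM I (\<lambda>_. lborel) \<Otimes>\<^sub>M lborel \<rightarrow>\<^sub>M PiM (insert i I) (\<lambda>_. lborel :: real measure)"
  using measurable_compose[OF _ measurable_add_dim[of i I "\<lambda>_. lborel"], of "\<lambda>(x, y). (x, l * y)"]
  by (simp add: split_beta')

lemma nn_integral_PiM_lborel_scale:
  fixes I :: "'i set" and l :: real
  assumes "finite I" "l > 0" and g: "g \<in> borel_measurable (PiM I (\<lambda>_. lborel))"
  shows "(\<integral>\<^sup>+x. g x \<partial>PiM I (\<lambda>_. lborel))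
    = ennreal (l ^ card I) * (\<integral>\<^sup>+x. g (\<lambda>i\<in>I. l * x i) \<partial>PiM I (\<lambda>_. lborel))"
  using assms(1) g
proof (induction I arbitrary: g rule: finite_induct)
  case empty
  then show ?case by (simp add: PiM_empty nn_integral_count_space_finite)
next
  case (insert i I)
  interpret product_sigma_finite "\<lambda>_::'i. lborel :: real measure" by standard
  note g_meas [measurable] = insert.prems
  define h where "h x = (\<integral>\<^sup>+y. g (x(i := l * y)) \<partial>(lborel :: real measure))" for x
  have [measurable]: "(\<lambda>(x, y). g (x(i := l * y))) \<in> borel_measurable (PiM I (\<lambda>_. lborel) \<Otimes>\<^sub>M lborel)"
    using measurable_compose[OF measurable_fun_upd_mult g_meas] by (simp add: split_beta')
  have h_meas: "h \<in> borel_measurable (PiM I (\<lambda>_. lborel))"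
    unfolding h_def by (rule lborel.borel_measurable_nn_integral) (simp add: split_beta')
  have "(\<integral>\<^sup>+x. g x \<partial>PiM (insert i I) (\<lambda>_. lborel))
      = (\<integral>\<^sup>+x. (\<integral>\<^sup>+y. g (x(i := y)) \<partial>(lborel :: real measure)) \<partial>PiM I (\<lambda>_. lborel))"
    using insert by (intro product_nn_integral_insert) auto
  also have "\<dots> = (\<integral>\<^sup>+x. ennreal l * h x \<partial>PiM I (\<lambda>_. lborel))"
  proof (intro nn_integral_cong)
    fix x :: "'i \<Rightarrow> real" assume "x \<in> space (PiM I (\<lambda>_. lborel))"
    then have "(\<lambda>y::real. g (x(i := y))) \<in> borel_measurable borel"
      using measurable_comp[OF measurable_component_update g_meas] \<open>i \<notin> I\<close>
      by (simp add: comp_def)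
    then show "(\<integral>\<^sup>+y. g (x(i := y)) \<partial>(lborel :: real measure)) = ennreal l * h x"
      unfolding h_def using nn_integral_real_affine[of "\<lambda>y. g (x(i := y))" l 0] \<open>l > 0\<close> by simp
  qed
  also have "\<dots> = ennreal l * (\<integral>\<^sup>+x. h x \<partial>PiM I (\<lambda>_. lborel))"
    using h_meas by (simp add: nn_integral_cmult)
  also have "(\<integral>\<^sup>+x. h x \<partial>PiM I (\<lambda>_. lborel))
      = ennreal (l ^ card I) * (\<integral>\<^sup>+x. h (\<lambda>j\<in>I. l * x j) \<partial>PiM I (\<lambda>_. lborel))"
    using insert.IH[OF h_meas] .
  also have "(\<integral>\<^sup>+x. h (\<lambda>j\<in>I. l * x j) \<partial>PiM I (\<lambda>_. lborel))
      = (\<integral>\<^sup>+x. (\<integral>\<^sup>+y. g (\<lambda>j\<in>insert i I. l * (x(i := y)) j) \<partial>lborel) \<partial>PiM I (\<lambda>_. lborel))"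
    unfolding h_def by (intro nn_integral_cong arg_cong[where f=g] ext) (auto simp: insert)
  also have "\<dots> = (\<integral>\<^sup>+x. g (\<lambda>j\<in>insert i I. l * x j) \<partial>PiM (insert i I) (\<lambda>_. lborel))"
    using insert by (intro product_nn_integral_insert[symmetric]) auto
  finally have "(\<integral>\<^sup>+x. g x \<partial>PiM (insert i I) (\<lambda>_. lborel))
      = ennreal l * ennreal (l ^ card I) * (\<integral>\<^sup>+x. g (\<lambda>j\<in>insert i I. l * x j) \<partial>PiM (insert i I) (\<lambda>_. lborel))"
    by (simp only: mult.assoc)
  moreover have "ennreal l * ennreal (l ^ card I) = ennreal (l ^ card (insert i I))"
    using insert \<open>l > 0\<close> by (simp add: ennreal_mult[symmetric])
  ultimately show ?case
    by metis
qed

lemma rpow_abs_power_diff_mult: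
  fixes l u v b :: real
  assumes "l > 0" "b > 0"
  shows "rpow \<bar>(l * u) ^ a - (l * v) ^ a\<bar> b = l powr (a * b) * rpow \<bar>u ^ a - v ^ a\<bar> b"
proof -
  have "\<bar>(l * u) ^ a - (l * v) ^ a\<bar> = l ^ a * \<bar>u ^ a - v ^ a\<bar>"
    using assms by (simp add: power_mult_distrib abs_mult right_diff_distrib[symmetric])
  moreover have "(l ^ a) powr b = l powr (a * b)"
    using assms by (simp add: powr_realpow[symmetric] powr_powr del: powr_realpow)
  ultimately show ?thesis
    using assms by (simp add: rpow_def powr_mult)
qed

lemma rpow_abs_mult: "l > 0 \<Longrightarrow> rpow \<bar>l * u\<bar> c = l powr c * rpow \<bar>u\<bar> c"
  by (cases "c = 0") (auto simp: rpow_def abs_mult powr_mult)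

lemma f_abc_scale_ge:
  fixes l b c :: real
  assumes l: "0 < l" "l \<le> 1" and b: "b > 0"
  shows "l powr (n * (a * b * n + c)) * f_abc a b c n x \<le> f_abc a b c n (\<lambda>i. l * x i)"
proof -
  define k where "k = l powr (a * b)"
  have k: "0 \<le> k" "k \<le> 1"
    using l b by (auto simp: k_def intro: powr_le1)
  define P where "P i j = rpow \<bar>x i ^ a - x j ^ a\<bar> b" for i j
  have row: "k ^ n * (\<Prod>j\<in>{i<..<n}. P i j) \<le> (\<Prod>j\<in>{i<..<n}. rpow \<bar>(l * x i) ^ a - (l * x j) ^ a\<bar> b)" for i
  proof -
    have "(\<Prod>j\<in>{i<..<n}. rpow \<bar>(l * x i) ^ a - (l * x j) ^ a\<bar> b) = k ^ card {i<..<n} * (\<Prod>j\<in>{i<..<n}. P i j)"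
      unfolding P_def k_def using l b by (simp add: rpow_abs_power_diff_mult prod.distrib)
    moreover have "k ^ n \<le> k ^ card {i<..<n}"
      using k by (intro power_decreasing) auto
    ultimately show ?thesis
      by (simp add: P_def mult_right_mono prod_nonneg)
  qed
  have "(k ^ n) ^ n * (\<Prod>i<n. \<Prod>j\<in>{i<..<n}. P i j) = (\<Prod>i<n. k ^ n * (\<Prod>j\<in>{i<..<n}. P i j))"
    by (simp add: prod.distrib)
  also have "\<dots> \<le> (\<Prod>i<n. \<Prod>j\<in>{i<..<n}. rpow \<bar>(l * x i) ^ a - (l * x j) ^ a\<bar> b)"
    using k by (intro prod_mono conjI row) (auto simp: P_def intro!: prod_nonneg mult_nonneg_nonneg)
  finally have pairs: "(k ^ n) ^ n * (\<Prod>i<n. \<Prod>j\<in>{i<..<n}. P i j)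
      \<le> (\<Prod>i<n. \<Prod>j\<in>{i<..<n}. rpow \<bar>(l * x i) ^ a - (l * x j) ^ a\<bar> b)" .
  have diag: "(\<Prod>i<n. rpow \<bar>l * x i\<bar> c) = (l powr c) ^ n * (\<Prod>i<n. rpow \<bar>x i\<bar> c)"
    using l by (simp add: rpow_abs_mult prod.distrib)
  have "l powr (n * (a * b * n + c)) = (k ^ n) ^ n * (l powr c) ^ n"
    using l by (simp add: k_def powr_realpow[symmetric] powr_powr powr_add[symmetric]
        algebra_simps del: powr_realpow)
  then have "l powr (n * (a * b * n + c)) * f_abc a b c n x
      = ((k ^ n) ^ n * (\<Prod>i<n. \<Prod>j\<in>{i<..<n}. P i j)) * ((l powr c) ^ n * (\<Prod>i<n. rpow \<bar>x i\<bar> c))"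
    by (simp add: f_abc_def P_def mult_ac)
  also have "\<dots> \<le> f_abc a b c n (\<lambda>i. l * x i)"
    unfolding f_abc_def diag[symmetric]
    by (intro mult_right_mono pairs) (auto intro!: prod_nonneg)
  finally show ?thesis .
qed

lemma Z_beta_scale_ge:
  fixes q b c p \<beta> :: real
  assumes q: "0 < q" "q \<le> 1" and b: "b > 0" and p: "p > 0"
  shows "ennreal (q powr (n * (1 + a * b * n + c) / p)) * Z_beta a b c p (q * \<beta>) n \<le> Z_beta a b c p \<beta> n"
proof -
  define l where "l = q powr (1 / p)"
  have l: "0 < l" "l \<le> 1"
    using q p by (auto simp: l_def intro: powr_le1)
  have lp: "l powr p = q"
    using q p by (simp add: l_def powr_powr)
  define g where "g \<beta>' x = ennreal (exp (-\<beta>' * (\<Sum>i<n. \<bar>x i\<bar> powr p)) * f_abc a b c n x)" for \<beta>' x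
  have g_meas [measurable]: "g \<beta>' \<in> borel_measurable (PiM {..<n} (\<lambda>_. lborel))" for \<beta>'
    unfolding g_def by measurable
  have pointwise: "ennreal (l powr (n * (a * b * n + c))) * g (q * \<beta>) x \<le> g \<beta> (\<lambda>i\<in>{..<n}. l * x i)" for x
  proof -
    define E where "E = exp (- \<beta> * (q * (\<Sum>i<n. \<bar>x i\<bar> powr p)))"
    have "(\<Sum>i<n. \<bar>(\<lambda>i\<in>{..<n}. l * x i) i\<bar> powr p) = q * (\<Sum>i<n. \<bar>x i\<bar> powr p)"
      using l by (simp add: abs_mult powr_mult lp sum_distrib_left)
    moreover have "f_abc a b c n (\<lambda>i\<in>{..<n}. l * x i) = f_abc a b c n (\<lambda>i. l * x i)"
      by (rule f_abc_cong) simp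
    ultimately have "g \<beta> (\<lambda>i\<in>{..<n}. l * x i) = ennreal (E * f_abc a b c n (\<lambda>i. l * x i))"
      by (simp add: g_def E_def)
    moreover have "g (q * \<beta>) x = ennreal (E * f_abc a b c n x)"
      by (simp add: g_def E_def mult_ac)
    moreover have "l powr (n * (a * b * n + c)) * (E * f_abc a b c n x) \<le> E * f_abc a b c n (\<lambda>i. l * x i)"
      using mult_left_mono[OF f_abc_scale_ge[OF l b, of n a c x], of E]
      by (simp add: E_def mult.left_commute)
    ultimately show ?thesis
      by (simp add: ennreal_mult[symmetric] f_abc_nonneg E_def ennreal_leI del: ennreal_mult')
  qed
  have "q powr (n * (1 + a * b * n + c) / p) = l ^ n * l powr (n * (a * b * n + c))"
    using l by (simp add: l_def powr_realpow[symmetric] powr_powr powr_add[symmetric] algebra_simps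
        add_divide_distrib del: powr_realpow)
  then have "ennreal (q powr (n * (1 + a * b * n + c) / p)) * Z_beta a b c p (q * \<beta>) n
      = ennreal (l ^ n) * (ennreal (l powr (n * (a * b * n + c))) * Z_beta a b c p (q * \<beta>) n)"
    using l by (simp add: ennreal_mult mult.assoc)
  also have "\<dots> = ennreal (l ^ n) * (\<integral>\<^sup>+x. ennreal (l powr (n * (a * b * n + c))) * g (q * \<beta>) x \<partial>PiM {..<n} (\<lambda>_. lborel))"
    by (simp add: Z_beta_def g_def nn_integral_cmult)
  also have "\<dots> \<le> ennreal (l ^ n) * (\<integral>\<^sup>+x. g \<beta> (\<lambda>i\<in>{..<n}. l * x i) \<partial>PiM {..<n} (\<lambda>_. lborel))"
    by (intro mult_left_mono nn_integral_mono pointwise) auto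
  also have "\<dots> = Z_beta a b c p \<beta> n"
    using nn_integral_PiM_lborel_scale[of "{..<n}" l "g \<beta>"] l by (simp add: Z_beta_def g_def)
  finally show ?thesis .
qed

section \<open>Adding a coordinate\<close>

lemma nn_integral_powr_minus_half_01:
  "(\<integral>\<^sup>+s. ennreal (indicator {0..1} s * s powr (-1/2)) \<partial>lborel) = 2"
proof -
  have "((\<lambda>s::real. s powr (-1/2)) has_integral 2) {0..1}"
    using has_integral_powr_from_0[of "-1/2" 1] by simp
  moreover have "(\<lambda>s::real. indicator {0..1} s * s powr (-1/2)) = (\<lambda>s. if s \<in> {0..1} then s powr (-1/2) else 0)"
    by (auto simp: indicator_def)
  ultimately have "((\<lambda>s::real. indicator {0..1} s * s powr (-1/2)) has_integral 2) UNIV"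
    by (simp only: has_integral_restrict_UNIV)
  then show ?thesis
    by (subst nn_integral_has_integral_lborel) (auto simp: indicator_def)
qed

lemma nn_integral_abs_powr_minus_half_le:
  "(\<integral>\<^sup>+s. ennreal (indicator {-1..1} s * \<bar>s\<bar> powr (-1/2)) \<partial>lborel) \<le> 4"
proof -
  let ?h = "\<lambda>s::real. ennreal (indicator {0..1} s * s powr (-1/2))"
  have "(\<integral>\<^sup>+s. ennreal (indicator {-1..1} s * \<bar>s\<bar> powr (-1/2)) \<partial>lborel)
      \<le> (\<integral>\<^sup>+s. ?h s + ?h (-s) \<partial>lborel)"
    by (intro nn_integral_mono)
      (auto simp: indicator_def ennreal_plus[symmetric] simp del: ennreal_plus)
  also have "\<dots> = (\<integral>\<^sup>+s. ?h s \<partial>lborel) + (\<integral>\<^sup>+s. ?h (-s) \<partial>lborel)"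
    by (rule nn_integral_add) auto
  also have "(\<integral>\<^sup>+s. ?h (-s) \<partial>lborel) = (\<integral>\<^sup>+s. ?h s \<partial>lborel)"
    using nn_integral_real_affine[of ?h "-1" 0] by simp
  finally show ?thesis
    unfolding nn_integral_powr_minus_half_01 by simp
qed

lemma nn_integral_abs_diff_powr_minus_half_le:
  "(\<integral>\<^sup>+t. ennreal (indicator {1..2} t * \<bar>t - u\<bar> powr (-1/2)) \<partial>lborel) \<le> 5"
proof -
  let ?h = "\<lambda>s::real. ennreal (indicator {-1..1} s * \<bar>s\<bar> powr (-1/2))"
  have "indicator {1..2} t * \<bar>t - u\<bar> powr (-1/2) \<le> indicator {1..2} t + indicator {-1..1} (t - u) * \<bar>t - u\<bar> powr (-1/2)"
    for t :: real
  proof (cases "\<bar>t - u\<bar> \<le> 1")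
    case False
    then have "\<bar>t - u\<bar> powr (-1/2) \<le> \<bar>t - u\<bar> powr 0"
      by (intro powr_mono) auto
    with False show ?thesis by (auto simp: indicator_def)
  qed (auto simp: indicator_def)
  then have "(\<integral>\<^sup>+t. ennreal (indicator {1..2} t * \<bar>t - u\<bar> powr (-1/2)) \<partial>lborel)
      \<le> (\<integral>\<^sup>+t. ennreal (indicator {1..2::real} t) + ?h (t - u) \<partial>lborel)"
    by (intro nn_integral_mono) (simp add: ennreal_plus[symmetric] del: ennreal_plus)
  also have "\<dots> = (\<integral>\<^sup>+t. ennreal (indicator {1..2::real} t) \<partial>lborel) + (\<integral>\<^sup>+t. ?h (t - u) \<partial>lborel)"
    by (rule nn_integral_add) auto
  also have "(\<integral>\<^sup>+t. ?h (t - u) \<partial>lborel) = (\<integral>\<^sup>+s. ?h s \<partial>lborel)"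
    using nn_integral_real_affine[of ?h 1 "-u"] by simp
  also have "(\<integral>\<^sup>+t. ennreal (indicator {1..2::real} t) \<partial>lborel) = 1"
    by (simp add: ennreal_indicator nn_integral_indicator)
  also have "1 + (\<integral>\<^sup>+s. ?h s \<partial>lborel) \<le> 1 + 4"
    by (rule add_left_mono[OF nn_integral_abs_powr_minus_half_le])
  finally show ?thesis
    by simp
qed

lemma exp_le_powr_inverse_sqrt:
  fixes x b :: real
  assumes "x > 0" "b \<ge> 0"
  shows "exp (2 * b * (1 - x powr (-1/2))) \<le> x powr b"
proof -
  have "ln (x powr (-1/2)) \<le> x powr (-1/2) - 1"
    using assms by (intro ln_le_minus_one) auto
  then have "2 * (1 - x powr (-1/2)) \<le> ln x"
    using assms by (simp add: ln_powr)
  then have "b * (2 * (1 - x powr (-1/2))) \<le> b * ln x"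
    using \<open>b \<ge> 0\<close> by (rule mult_left_mono)
  then show ?thesis
    using assms by (simp add: powr_def mult_ac)
qed

lemma exp_inverse_sqrt_sum_le_prod_rpow:
  fixes b :: real and s d :: "nat \<Rightarrow> real"
  assumes "b \<ge> 0" and "\<And>i. i < m \<Longrightarrow> 0 < s i \<and> s i \<le> d i"
  shows "exp (\<Sum>i<m. 2 * b * (1 - s i powr (-1/2))) \<le> (\<Prod>i<m. rpow (d i) b)"
proof -
  have "exp (2 * b * (1 - s i powr (-1/2))) \<le> rpow (d i) b" if "i < m" for i
  proof -
    have "0 < s i" "s i \<le> d i"
      using assms(2) that by auto
    then have "exp (2 * b * (1 - s i powr (-1/2))) \<le> s i powr b" "s i powr b \<le> d i powr b"
      using exp_le_powr_inverse_sqrt assms(1) by (auto intro: powr_mono2)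
    then show ?thesis
      by (simp add: rpow_def)
  qed
  then have "(\<Prod>i<m. exp (2 * b * (1 - s i powr (-1/2)))) \<le> (\<Prod>i<m. rpow (d i) b)"
    by (intro prod_mono) auto
  then show ?thesis
    by (simp add: exp_sum)
qed

lemma diff_le_power_diff:
  fixes v s :: real
  assumes "1 \<le> v" "v \<le> s"
  shows "s - v \<le> s ^ Suc n - v ^ Suc n"
proof (induction n)
  case (Suc n)
  have "v ^ Suc n \<le> s ^ Suc n"
    using assms by (intro power_mono) auto
  then have "s ^ Suc n - v ^ Suc n \<le> s * (s ^ Suc n - v ^ Suc n)"
    using assms mult_right_mono[of 1 s "s ^ Suc n - v ^ Suc n"] by simp
  moreover have "s ^ Suc (Suc n) - v ^ Suc (Suc n) = s * (s ^ Suc n - v ^ Suc n) + v ^ Suc n * (s - v)"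
    by (simp add: algebra_simps)
  moreover have "0 \<le> v ^ Suc n * (s - v)"
    using assms by simp
  ultimately show ?case
    using Suc by linarith
qed simp

lemma exists_abs_diff_le_abs_power_diff:
  fixes w :: real
  assumes "a \<ge> 1"
  shows "\<exists>u. \<forall>t\<ge>1. \<bar>t - u\<bar> \<le> \<bar>w ^ a - t ^ a\<bar>"
proof (cases "w ^ a \<ge> 1")
  case True
  obtain k where k: "a = Suc k"
    using assms by (cases a) auto
  define u where "u = root a (w ^ a)"
  have u: "u \<ge> 1" "u ^ a = w ^ a"
    using True assms by (simp_all add: u_def)
  have "\<bar>t - u\<bar> \<le> \<bar>w ^ a - t ^ a\<bar>" if "t \<ge> 1" for t
    using diff_le_power_diff[OF u(1), of t k] diff_le_power_diff[OF that, of u k] u k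
    by (cases "u \<le> t") auto
  then show ?thesis
    by blast
next
  case False
  have "\<bar>t - 1\<bar> \<le> \<bar>w ^ a - t ^ a\<bar>" if "t \<ge> 1" for t
    using False that power_increasing[of 1 a t] assms by auto
  then show ?thesis
    by blast
qed

lemma nn_integral_exp_inverse_sqrt_sum_ge:
  fixes u :: "nat \<Rightarrow> real" and b :: real
  assumes b: "b > 0"
  shows "ennreal (exp (-10 * b * m))
    \<le> (\<integral>\<^sup>+t. ennreal (indicator {1..2} t * exp (\<Sum>i<m. 2 * b * (1 - \<bar>t - u i\<bar> powr (-1/2)))) \<partial>lborel)"
    (is "_ \<le> (\<integral>\<^sup>+t. ennreal (?F t) \<partial>lborel)")
proof -
  define E where "E = exp (-10 * b * m)"
  have E: "E > 0"
    by (simp add: E_def)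
  define g where "g i t = indicator {1..2} t * \<bar>t - u i\<bar> powr (-1/2)" for i and t :: real
  \<comment> \<open>tangent line of exp at -10 b m, chosen so that its integral over [1,2] stays positive\<close>
  have pointwise: "indicator {1..2} t * (E * (1 + 12 * b * m)) \<le> ?F t + (\<Sum>i<m. 2 * b * E * g i t)" for t
  proof (cases "t \<in> {1..2}")
    case True
    let ?Y = "\<Sum>i<m. 2 * b * (1 - \<bar>t - u i\<bar> powr (-1/2))"
    have "E * (1 + (?Y + 10 * b * m)) \<le> E * exp (?Y + 10 * b * m)"
      using E by (intro mult_left_mono exp_ge_add_one_self) auto
    also have "\<dots> = exp ?Y"
      by (simp add: E_def exp_add[symmetric])
    finally show ?thesis
      using True by (simp add: g_def sum_subtractf sum_distrib_left algebra_simps)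
  qed (simp add: g_def)
  have "ennreal (E * (1 + 12 * b * m)) = (\<integral>\<^sup>+t. ennreal (E * (1 + 12 * b * m)) * indicator {1..2::real} t \<partial>lborel)"
    by (subst nn_integral_cmult_indicator) auto
  also have "\<dots> = (\<integral>\<^sup>+t. ennreal (indicator {1..2::real} t * (E * (1 + 12 * b * m))) \<partial>lborel)"
    by (intro nn_integral_cong) (auto simp: indicator_def)
  also have "\<dots> \<le> (\<integral>\<^sup>+t. ennreal (?F t) + (\<Sum>i<m. ennreal (2 * b * E) * ennreal (g i t)) \<partial>lborel)"
    using pointwise E b
    by (intro nn_integral_mono)
      (simp add: g_def sum_ennreal ennreal_mult[symmetric] ennreal_plus[symmetric] sum_nonneg
        del: ennreal_plus)
  also have "\<dots> = (\<integral>\<^sup>+t. ennreal (?F t) \<partial>lborel) + (\<Sum>i<m. ennreal (2 * b * E) * (\<integral>\<^sup>+t. ennreal (g i t) \<partial>lborel))"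
    by (simp add: nn_integral_add nn_integral_sum nn_integral_cmult g_def)
  also have "\<dots> \<le> (\<integral>\<^sup>+t. ennreal (?F t) \<partial>lborel) + (\<Sum>i<m. ennreal (2 * b * E) * 5)"
    unfolding g_def by (intro add_left_mono sum_mono mult_left_mono nn_integral_abs_diff_powr_minus_half_le) auto
  also have "(\<Sum>i<m. ennreal (2 * b * E) * 5) = ennreal (10 * b * m * E)"
  proof -
    have "ennreal (2 * b * E) * 5 = ennreal (10 * b * E)"
      using E b by (simp add: ennreal_mult'' mult_ac)
    then show ?thesis
      using sum_ennreal[of "{..<m}" "\<lambda>_. 10 * b * E"] E b by (simp add: mult_ac)
  qed
  finally have "ennreal (10 * b * m * E) + ennreal E \<le> ennreal (10 * b * m * E) + (\<integral>\<^sup>+t. ennreal (?F t) \<partial>lborel)"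
    using E b order_trans[of "ennreal (10 * b * m * E) + ennreal E" "ennreal (E * (1 + 12 * b * m))"]
    by (simp add: ennreal_plus[symmetric] algebra_simps add.commute del: ennreal_plus)
  then show ?thesis
    unfolding E_def[symmetric] by (simp add: ennreal_add_left_cancel_le)
qed

lemma nn_integral_new_coordinate_ge:
  fixes x :: "nat \<Rightarrow> real" and b c \<beta> p :: real
  assumes a: "a \<ge> 1" and b: "b > 0" and c: "c \<ge> 0" and \<beta>: "\<beta> \<ge> 0" and p: "p \<ge> 0"
  shows "ennreal (exp (-\<beta> * 2 powr p - 10 * b * m))
    \<le> (\<integral>\<^sup>+t. ennreal (exp (-\<beta> * \<bar>t\<bar> powr p) * (\<Prod>i<m. rpow \<bar>x i ^ a - t ^ a\<bar> b) * rpow \<bar>t\<bar> c) \<partial>lborel)"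
    (is "_ \<le> (\<integral>\<^sup>+t. ennreal (?G t) \<partial>lborel)")
proof -
  have "\<forall>i. \<exists>u. \<forall>t\<ge>1. \<bar>t - u\<bar> \<le> \<bar>x i ^ a - t ^ a\<bar>"
    using exists_abs_diff_le_abs_power_diff[OF a] by blast
  then obtain u where u: "\<And>i t. t \<ge> 1 \<Longrightarrow> \<bar>t - u i\<bar> \<le> \<bar>x i ^ a - t ^ a\<bar>"
    by metis
  define F where "F t = indicator {1..2} t * exp (\<Sum>i<m. 2 * b * (1 - \<bar>t - u i\<bar> powr (-1/2)))" for t
  define C where "C = exp (-\<beta> * 2 powr p)"
  have pointwise: "C * F t \<le> ?G t" if t: "t \<notin> u ` {..<m}" for t
  proof (cases "t \<in> {1..2}")
    case True
    have "C \<le> exp (-\<beta> * \<bar>t\<bar> powr p)"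
      unfolding C_def using True \<beta> p by (auto intro!: mult_left_mono powr_mono2)
    moreover have "exp (\<Sum>i<m. 2 * b * (1 - \<bar>t - u i\<bar> powr (-1/2))) \<le> (\<Prod>i<m. rpow \<bar>x i ^ a - t ^ a\<bar> b)"
      using True t u b by (intro exp_inverse_sqrt_sum_le_prod_rpow) auto
    moreover have "1 \<le> rpow \<bar>t\<bar> c"
      using True c by (auto simp: rpow_def intro!: ge_one_powr_ge_zero)
    ultimately have "C * exp (\<Sum>i<m. 2 * b * (1 - \<bar>t - u i\<bar> powr (-1/2))) * 1 \<le> ?G t"
      by (intro mult_mono) (auto simp: C_def simp del: exp_sum intro!: prod_nonneg mult_nonneg_nonneg)
    then show ?thesis
      using True by (simp add: F_def)
  qed (simp add: F_def prod_nonneg)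
  have "ennreal (exp (-\<beta> * 2 powr p - 10 * b * m)) = ennreal C * ennreal (exp (-10 * b * m))"
    by (simp add: C_def ennreal_mult[symmetric] exp_diff exp_minus field_simps)
  also have "\<dots> \<le> ennreal C * (\<integral>\<^sup>+t. ennreal (F t) \<partial>lborel)"
    unfolding F_def by (intro mult_left_mono nn_integral_exp_inverse_sqrt_sum_ge b) auto
  also have "\<dots> = (\<integral>\<^sup>+t. ennreal (C * F t) \<partial>lborel)"
    by (simp add: F_def C_def nn_integral_cmult ennreal_mult)
  also have "\<dots> \<le> (\<integral>\<^sup>+t. ennreal (?G t) \<partial>lborel)"
  proof (rule nn_integral_mono_AE)
    have "AE t in lborel. t \<notin> u ` {..<m}"
      by (intro AE_not_in finite_imp_null_set_lborel) auto
    then show "AE t in lborel. ennreal (C * F t) \<le> ennreal (?G t)"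
      by eventually_elim (rule ennreal_leI[OF pointwise])
  qed
  finally show ?thesis .
qed

lemma Z_beta_0: "Z_beta a b c p \<beta> 0 = 1"
  by (simp add: Z_beta_def f_abc_def PiM_empty nn_integral_count_space_finite)

lemma Z_beta_Suc_ge:
  fixes b c p \<beta> :: real
  assumes a: "a \<ge> 1" and b: "b > 0" and c: "c \<ge> 0" and \<beta>: "\<beta> \<ge> 0" and p: "p \<ge> 0"
  shows "ennreal (exp (-\<beta> * 2 powr p - 10 * b * m)) * Z_beta a b c p \<beta> m \<le> Z_beta a b c p \<beta> (Suc m)"
proof -
  interpret product_sigma_finite "\<lambda>_::nat. lborel :: real measure" by standard
  define g where "g m x = ennreal (exp (-\<beta> * (\<Sum>i<m. \<bar>x i\<bar> powr p)) * f_abc a b c m x)" for m x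
  have [measurable]: "g m \<in> borel_measurable (PiM {..<m} (\<lambda>_. lborel))" for m
    unfolding g_def by measurable
  define h where "h x t = exp (-\<beta> * \<bar>t\<bar> powr p) * (\<Prod>i<m. rpow \<bar>x i ^ a - t ^ a\<bar> b) * rpow \<bar>t\<bar> c" for x t
  have g_Suc: "g (Suc m) (x(m := t)) = g m x * ennreal (h x t)" for x t
  proof -
    have "(\<Sum>i<Suc m. \<bar>(x(m := t)) i\<bar> powr p) = (\<Sum>i<m. \<bar>x i\<bar> powr p) + \<bar>t\<bar> powr p"
      by (simp add: lessThan_Suc)
    then show ?thesis
      unfolding g_def h_def f_abc_fun_upd_Suc
      by (simp add: ennreal_mult[symmetric] f_abc_nonneg prod_nonneg algebra_simps exp_add[symmetric]
          del: ennreal_mult')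
  qed
  have "ennreal (exp (-\<beta> * 2 powr p - 10 * b * m)) * Z_beta a b c p \<beta> m
      = Z_beta a b c p \<beta> m * ennreal (exp (-\<beta> * 2 powr p - 10 * b * m))"
    by (rule mult.commute)
  also have "\<dots> = (\<integral>\<^sup>+x. g m x * ennreal (exp (-\<beta> * 2 powr p - 10 * b * m)) \<partial>PiM {..<m} (\<lambda>_. lborel))"
    by (simp add: Z_beta_def g_def nn_integral_multc)
  also have "\<dots> \<le> (\<integral>\<^sup>+x. g m x * (\<integral>\<^sup>+t. ennreal (h x t) \<partial>lborel) \<partial>PiM {..<m} (\<lambda>_. lborel))"
    unfolding h_def by (intro nn_integral_mono mult_left_mono nn_integral_new_coordinate_ge assms) auto
  also have "\<dots> = (\<integral>\<^sup>+x. (\<integral>\<^sup>+t. g (Suc m) (x(m := t)) \<partial>lborel) \<partial>PiM {..<m} (\<lambda>_. lborel))"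
    unfolding g_Suc by (intro nn_integral_cong) (simp add: h_def nn_integral_cmult)
  also have "\<dots> = (\<integral>\<^sup>+x. g (Suc m) x \<partial>PiM (insert m {..<m}) (\<lambda>_. lborel))"
    by (rule product_nn_integral_insert[symmetric]) (auto simp: lessThan_Suc[symmetric])
  also have "\<dots> = Z_beta a b c p \<beta> (Suc m)"
    by (simp add: Z_beta_def g_def lessThan_Suc)
  finally show ?thesis .
qed

lemma Z_beta_pos:
  fixes b c p \<beta> :: real
  assumes "a \<ge> 1" "b > 0" "c \<ge> 0" "\<beta> \<ge> 0" "p \<ge> 0"
  shows "Z_beta a b c p \<beta> m > 0"
proof (induction m)
  case (Suc m)
  then have "0 < ennreal (exp (-\<beta> * 2 powr p - 10 * b * m)) * Z_beta a b c p \<beta> m"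
    by (simp add: ennreal_zero_less_mult_iff)
  also have "\<dots> \<le> Z_beta a b c p \<beta> (Suc m)"
    by (rule Z_beta_Suc_ge[OF assms])
  finally show ?case .
qed (simp add: Z_beta_0)

section \<open>Finiteness\<close>

lemma power_le_exp_bound:
  fixes y :: real
  assumes "y \<ge> 0"
  shows "y ^ N \<le> real N ^ N * exp y"
proof (cases "N = 0")
  case False
  have "y / N \<le> exp (y / N)"
    using exp_ge_add_one_self[of "y / N"] by linarith
  then have "(y / N) ^ N \<le> exp (y / N) ^ N"
    using assms by (intro power_mono) auto
  also have "\<dots> = exp y"
    using False by (simp add: exp_of_nat_mult[symmetric])
  finally show ?thesis
    using False by (simp add: power_divide field_simps)
qed (use assms in simp)

lemma powr_mult_one_plus_square_le_exp:
  fixes \<beta> K r :: real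
  assumes \<beta>: "\<beta> > 0" and K: "K \<ge> 0" and r: "r \<ge> 0"
  defines "N \<equiv> nat \<lceil>K + 2\<rceil>"
  shows "(1 + r) powr K * (1 + r\<^sup>2) \<le> (N / \<beta>) ^ N * exp (\<beta> * (1 + r))"
proof -
  have "1 + r\<^sup>2 \<le> (1 + r) powr 2"
    using r by (simp add: power2_eq_square algebra_simps)
  then have "(1 + r) powr K * (1 + r\<^sup>2) \<le> (1 + r) powr (K + 2)"
    by (simp add: powr_add mult_left_mono)
  also have "\<dots> \<le> (1 + r) powr N"
    unfolding N_def using r K by (intro powr_mono) auto
  also have "\<dots> = (\<beta> * (1 + r)) ^ N / \<beta> ^ N"
    using \<beta> r by (simp add: powr_realpow power_mult_distrib)
  also have "\<dots> \<le> real N ^ N * exp (\<beta> * (1 + r)) / \<beta> ^ N"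
    using \<beta> r by (intro divide_right_mono power_le_exp_bound) auto
  finally show ?thesis
    by (simp add: power_divide)
qed

lemma exp_neg_powr_mult_powr_le_inverse_square:
  fixes \<beta> K p :: real
  assumes \<beta>: "\<beta> > 0" and K: "K \<ge> 0" and p: "p \<ge> 1"
  obtains D where "D \<ge> 0" "\<And>s. exp (-\<beta> * \<bar>s\<bar> powr p) * (1 + \<bar>s\<bar>) powr K \<le> D * inverse (1 + s\<^sup>2)"
proof
  define N where "N = nat \<lceil>K + 2\<rceil>"
  show "exp (2 * \<beta>) * (N / \<beta>) ^ N \<ge> 0"
    using \<beta> by simp
  fix s :: real
  define r where "r = \<bar>s\<bar>"
  have r: "r \<ge> 0"
    by (simp add: r_def)
  have "r - 1 \<le> r powr p"
    using p powr_mono[of 1 p r] by (cases "r \<ge> 1") (auto intro: order_trans[OF _ powr_ge_zero])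
  then have "-\<beta> * r powr p \<le> 2 * \<beta> + -\<beta> * (1 + r)"
    using \<beta> mult_left_mono[of "r - 1" "r powr p" \<beta>] by (simp add: algebra_simps)
  then have "exp (-\<beta> * r powr p) \<le> exp (2 * \<beta>) * exp (-\<beta> * (1 + r))"
    by (simp add: exp_add[symmetric] del: exp_add)
  moreover have "(1 + r) powr K * (1 + s\<^sup>2) \<le> (N / \<beta>) ^ N * exp (\<beta> * (1 + r))"
    using powr_mult_one_plus_square_le_exp[OF \<beta> K r] by (simp add: r_def N_def)
  ultimately have "exp (-\<beta> * r powr p) * ((1 + r) powr K * (1 + s\<^sup>2))
      \<le> exp (2 * \<beta>) * exp (-\<beta> * (1 + r)) * ((N / \<beta>) ^ N * exp (\<beta> * (1 + r)))"
    by (rule mult_mono) auto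
  also have "\<dots> = exp (2 * \<beta>) * (N / \<beta>) ^ N * (exp (-\<beta> * (1 + r)) * exp (\<beta> * (1 + r)))"
    by (simp only: mult_ac)
  also have "\<dots> = exp (2 * \<beta>) * (N / \<beta>) ^ N"
    by (simp flip: exp_add)
  finally have "exp (-\<beta> * r powr p) * (1 + r) powr K * (1 + s\<^sup>2) \<le> exp (2 * \<beta>) * (N / \<beta>) ^ N"
    by (simp only: mult.assoc)
  moreover have "0 < 1 + s\<^sup>2"
    by (simp add: add_pos_nonneg)
  ultimately show "exp (-\<beta> * \<bar>s\<bar> powr p) * (1 + \<bar>s\<bar>) powr K \<le> exp (2 * \<beta>) * (N / \<beta>) ^ N * inverse (1 + s\<^sup>2)"
    by (simp only: r_def divide_inverse[symmetric] pos_le_divide_eq)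
qed

lemma nn_integral_exp_neg_powr_mult_powr_finite:
  fixes \<beta> K p :: real
  assumes "\<beta> > 0" "K \<ge> 0" "p \<ge> 1"
  shows "(\<integral>\<^sup>+s. ennreal (exp (-\<beta> * \<bar>s\<bar> powr p) * (1 + \<bar>s\<bar>) powr K) \<partial>lborel) < \<infinity>"
proof -
  obtain D where D: "D \<ge> 0" "\<And>s. exp (-\<beta> * \<bar>s\<bar> powr p) * (1 + \<bar>s\<bar>) powr K \<le> D * inverse (1 + s\<^sup>2)"
    using exp_neg_powr_mult_powr_le_inverse_square[OF assms] by blast
  have "integrable lborel (\<lambda>s::real. inverse (1 + s\<^sup>2))"
    using integrable_inverse_1_plus_square by (simp add: set_integrable_def)
  then have "(\<integral>\<^sup>+s. ennreal (inverse (1 + s\<^sup>2)) \<partial>lborel) < \<infinity>"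
    by (simp add: integrable_iff_bounded add_pos_nonneg)
  moreover have "(\<integral>\<^sup>+s. ennreal (exp (-\<beta> * \<bar>s\<bar> powr p) * (1 + \<bar>s\<bar>) powr K) \<partial>lborel)
      \<le> (\<integral>\<^sup>+s. ennreal D * ennreal (inverse (1 + s\<^sup>2)) \<partial>lborel)"
    using D by (intro nn_integral_mono) (simp add: ennreal_mult[symmetric] add_pos_nonneg ennreal_leI)
  ultimately show ?thesis
    by (simp add: nn_integral_cmult ennreal_mult_less_top order.strict_trans1 less_top)
qed

lemma abs_le_prod_one_plus_abs:
  fixes x :: "nat \<Rightarrow> real"
  assumes "k < m"
  shows "\<bar>x k\<bar> \<le> (\<Prod>i<m. 1 + \<bar>x i\<bar>)"
proof -
  have "(\<Prod>i<m. 1 + \<bar>x i\<bar>) = (1 + \<bar>x k\<bar>) * (\<Prod>i\<in>{..<m} - {k}. 1 + \<bar>x i\<bar>)"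
    using assms by (subst prod.remove[of _ k]) auto
  moreover have "1 \<le> (\<Prod>i\<in>{..<m} - {k}. 1 + \<bar>x i\<bar>)"
    by (intro prod_ge_1) auto
  ultimately have "1 + \<bar>x k\<bar> \<le> (\<Prod>i<m. 1 + \<bar>x i\<bar>)"
    by (simp add: mult_le_cancel_left1)
  then show ?thesis
    by linarith
qed

lemma rpow_abs_power_diff_le:
  fixes u v R b :: real
  assumes "\<bar>u\<bar> \<le> R" "\<bar>v\<bar> \<le> R" "b > 0" and R: "R > 0"
  shows "rpow \<bar>u ^ a - v ^ a\<bar> b \<le> 2 powr b * R powr (a * b)"
proof -
  have "\<bar>u ^ a - v ^ a\<bar> \<le> \<bar>u\<bar> ^ a + \<bar>v\<bar> ^ a"
    using abs_triangle_ineq4[of "u ^ a" "v ^ a"] by (simp add: power_abs)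
  also have "\<dots> \<le> 2 * R ^ a"
    using power_mono[OF assms(1), of a] power_mono[OF assms(2), of a] by simp
  finally have "\<bar>u ^ a - v ^ a\<bar> powr b \<le> (2 * R ^ a) powr b"
    using assms(3) by (intro powr_mono2) auto
  also have "\<dots> = 2 powr b * R powr (a * b)"
    using R by (simp add: powr_mult powr_realpow[symmetric] powr_powr del: powr_realpow)
  finally show ?thesis
    using assms(3) by (simp add: rpow_def)
qed

lemma f_abc_le_prod_powr:
  fixes x :: "nat \<Rightarrow> real" and b c :: real
  assumes b: "b > 0" and c: "c \<ge> 0"
  shows "f_abc a b c m x \<le> (2 powr b) ^ (m * m) * (\<Prod>k<m. (1 + \<bar>x k\<bar>) powr (m * (a * b * m + c)))"
proof -
  define R where "R = (\<Prod>i<m. 1 + \<bar>x i\<bar>)"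
  have R: "1 \<le> R"
    unfolding R_def by (intro prod_ge_1) auto
  have x_le: "\<bar>x i\<bar> \<le> R" if "i < m" for i
    unfolding R_def using that by (rule abs_le_prod_one_plus_abs)
  define Q where "Q = 2 powr b * R powr (a * b)"
  have Q: "1 \<le> Q"
    unfolding Q_def using R b by (intro mult_ge1_I ge_one_powr_ge_zero) auto
  have pair: "rpow \<bar>x i ^ a - x j ^ a\<bar> b \<le> Q" if "i < m" "j < m" for i j
    unfolding Q_def using x_le[OF that(1)] x_le[OF that(2)] b R by (intro rpow_abs_power_diff_le) auto
  have "(\<Prod>j\<in>{i<..<m}. rpow \<bar>x i ^ a - x j ^ a\<bar> b) \<le> Q ^ m" if "i < m" for i
  proof -
    have "(\<Prod>j\<in>{i<..<m}. rpow \<bar>x i ^ a - x j ^ a\<bar> b) \<le> (\<Prod>j\<in>{i<..<m}. Q)"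
      using that by (intro prod_mono) (auto intro: pair)
    also have "\<dots> \<le> Q ^ m"
      using Q by (simp add: power_increasing)
    finally show ?thesis .
  qed
  then have pairs: "(\<Prod>i<m. \<Prod>j\<in>{i<..<m}. rpow \<bar>x i ^ a - x j ^ a\<bar> b) \<le> Q ^ (m * m)"
    using prod_mono[of "{..<m}" _ "\<lambda>_. Q ^ m"] by (simp add: prod_nonneg power_mult)
  have "rpow \<bar>x i\<bar> c \<le> R powr c" if "i < m" for i
    using x_le[OF that] c R by (auto simp: rpow_def intro: powr_mono2)
  then have diag: "(\<Prod>i<m. rpow \<bar>x i\<bar> c) \<le> (R powr c) ^ m"
    using prod_mono[of "{..<m}" "\<lambda>i. rpow \<bar>x i\<bar> c" "\<lambda>_. R powr c"] by simp
  have "f_abc a b c m x \<le> Q ^ (m * m) * (R powr c) ^ m"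
    unfolding f_abc_def using pairs diag Q by (intro mult_mono) (auto intro!: prod_nonneg)
  also have "\<dots> = (2 powr b) ^ (m * m) * R powr (m * (a * b * m + c))"
    using R by (simp add: Q_def power_mult_distrib powr_realpow[symmetric] powr_powr powr_add[symmetric]
        algebra_simps del: powr_realpow)
  also have "R powr (m * (a * b * m + c)) = (\<Prod>k<m. (1 + \<bar>x k\<bar>) powr (m * (a * b * m + c)))"
    unfolding R_def by (rule prod_powr_distrib)
  finally show ?thesis .
qed

lemma Z_beta_finite:
  fixes b c p \<beta> :: real
  assumes b: "b > 0" and c: "c \<ge> 0" and \<beta>: "\<beta> > 0" and p: "p \<ge> 1"
  shows "Z_beta a b c p \<beta> m < \<infinity>"
proof -
  interpret product_sigma_finite "\<lambda>_::nat. lborel :: real measure" by standard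
  define K where "K = m * (a * b * m + c)"
  define H where "H s = exp (-\<beta> * \<bar>s\<bar> powr p) * (1 + \<bar>s\<bar>) powr K" for s :: real
  have "exp (-\<beta> * (\<Sum>i<m. \<bar>x i\<bar> powr p)) * f_abc a b c m x \<le> (2 powr b) ^ (m * m) * (\<Prod>k<m. H (x k))" for x
  proof -
    have "exp (-\<beta> * (\<Sum>i<m. \<bar>x i\<bar> powr p)) * f_abc a b c m x
        \<le> (\<Prod>k<m. exp (-\<beta> * \<bar>x k\<bar> powr p)) * ((2 powr b) ^ (m * m) * (\<Prod>k<m. (1 + \<bar>x k\<bar>) powr K))"
      unfolding K_def by (intro mult_mono f_abc_le_prod_powr b c) (auto simp: sum_distrib_left exp_sum intro!: prod_nonneg f_abc_nonneg)
    then show ?thesis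
      by (simp add: H_def prod.distrib mult_ac)
  qed
  then have "Z_beta a b c p \<beta> m \<le> (\<integral>\<^sup>+x. ennreal ((2 powr b) ^ (m * m)) * (\<Prod>k<m. ennreal (H (x k))) \<partial>PiM {..<m} (\<lambda>_. lborel))"
    unfolding Z_beta_def
    by (intro nn_integral_mono) (simp add: H_def prod_ennreal ennreal_mult[symmetric] prod_nonneg ennreal_leI)
  also have "\<dots> = ennreal ((2 powr b) ^ (m * m)) * (\<integral>\<^sup>+x. (\<Prod>k<m. ennreal (H (x k))) \<partial>PiM {..<m} (\<lambda>_. lborel))"
    by (rule nn_integral_cmult) (unfold H_def, measurable)
  also have "(\<integral>\<^sup>+x. (\<Prod>k<m. ennreal (H (x k))) \<partial>PiM {..<m} (\<lambda>_. lborel)) = (\<Prod>k<m. \<integral>\<^sup>+s. ennreal (H s) \<partial>lborel)"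
    by (rule product_nn_integral_prod) (auto simp: H_def)
  also have "ennreal ((2 powr b) ^ (m * m)) * (\<Prod>k<m. \<integral>\<^sup>+s. ennreal (H s) \<partial>lborel) < \<infinity>"
    using nn_integral_exp_neg_powr_mult_powr_finite[OF \<beta> _ p, of K] b c
    by (simp add: K_def H_def ennreal_mult_less_top power_less_top_ennreal)
  finally show ?thesis .
qed

section \<open>The ratio bound\<close>

lemma gamma_p_pos: "p \<ge> 1 \<Longrightarrow> gamma_p p > 0"
  unfolding gamma_p_def by (intro divide_pos_pos mult_pos_pos Gamma_real_pos) auto

lemma exp_le_powr_pred_ratio:
  fixes K p :: real
  assumes n: "n \<ge> 2" and K: "K \<ge> 0" and p: "p \<ge> 1"
  shows "exp (-2 * K) \<le> ((real n - 1) / n) powr (n * K / p)"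
proof -
  define q where "q = (real n - 1) / n"
  have q: "q > 0"
    using n by (simp add: q_def)
  have "ln (1 / q) \<le> 1 / q - 1"
    using q by (intro ln_le_minus_one) auto
  then have ln_q: "-1 / (real n - 1) \<le> ln q"
    using n q by (simp add: q_def ln_div field_simps)
  have "n * K / p \<le> n * K"
    using divide_left_mono[of 1 p "n * K"] K p by simp
  also have "\<dots> \<le> 2 * (real n - 1) * K"
    using n K by (intro mult_right_mono) auto
  finally have "n * K / p / (real n - 1) \<le> 2 * K"
    using n by (subst pos_divide_le_eq) (auto simp: mult_ac)
  then have "-2 * K \<le> n * K / p * (-1 / (real n - 1))"
    by simp
  also have "\<dots> \<le> n * K / p * ln q"
    using ln_q n K p by (intro mult_left_mono) auto
  finally show ?thesis
    using q n by (simp add: q_def powr_def mult.commute)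
qed

lemma le_enn2real_divide:
  fixes x y :: ennreal
  assumes "ennreal L * x \<le> y" "L \<ge> 0" "0 < x" "x < \<infinity>" "y < \<infinity>"
  shows "L \<le> enn2real y / enn2real x"
proof -
  have "L * enn2real x \<le> enn2real y"
    using enn2real_mono[OF assms(1)] assms(2,5) by (simp add: enn2real_mult)
  moreover have "enn2real x > 0"
    using assms(3,4) by (simp add: enn2real_positive_iff)
  ultimately show ?thesis
    by (simp add: pos_le_divide_eq)
qed

lemma Z_beta_Suc_rescaled_ge:
  fixes b c p \<alpha> :: real
  assumes a: "a \<ge> 1" and b: "b > 0" and c: "c \<ge> 0" and p: "p \<ge> 1" and \<alpha>: "\<alpha> \<ge> 0" and m: "m \<ge> 1"
  shows "ennreal (exp (-2 * (1 + a * b * Suc m + c) - \<alpha> * m * 2 powr p - 10 * b * m)) * Z_beta a b c p (\<alpha> * m) m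
    \<le> Z_beta a b c p (\<alpha> * Suc m) (Suc m)"
proof -
  define n where "n = Suc m"
  have n: "n \<ge> 2" and m_real: "real m = real n - 1"
    using m by (auto simp: n_def)
  define K where "K = 1 + a * b * n + c"
  have K: "K \<ge> 0"
    using b c by (simp add: K_def)
  have q: "0 < (real n - 1) / n" "(real n - 1) / n \<le> 1"
    using n by auto
  have q_eq: "(real n - 1) / n * (\<alpha> * n) = \<alpha> * m"
    using n m_real by simp
  have "ennreal (((real n - 1) / n) powr (n * K / p)) * Z_beta a b c p (\<alpha> * m) n \<le> Z_beta a b c p (\<alpha> * n) n"
    using Z_beta_scale_ge[OF q b, of p n a c "\<alpha> * n"] p unfolding q_eq K_def by simp
  moreover have "ennreal (exp (-2 * K)) \<le> ennreal (((real n - 1) / n) powr (n * K / p))"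
    using exp_le_powr_pred_ratio[OF n K p] by (rule ennreal_leI)
  ultimately have scale: "ennreal (exp (-2 * K)) * Z_beta a b c p (\<alpha> * m) n \<le> Z_beta a b c p (\<alpha> * n) n"
    by (meson mult_right_mono order_trans zero_le)
  have step: "ennreal (exp (-\<alpha> * m * 2 powr p - 10 * b * m)) * Z_beta a b c p (\<alpha> * m) m \<le> Z_beta a b c p (\<alpha> * m) n"
    unfolding n_def using Z_beta_Suc_ge[OF a b c, of "\<alpha> * m" p m] \<alpha> p by simp
  have "exp (-2 * K - \<alpha> * m * 2 powr p - 10 * b * m) = exp (-2 * K) * exp (-\<alpha> * m * 2 powr p - 10 * b * m)"
    by (subst exp_add[symmetric]) simp
  then have "ennreal (exp (-2 * K - \<alpha> * m * 2 powr p - 10 * b * m)) * Z_beta a b c p (\<alpha> * m) m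
      = ennreal (exp (-2 * K)) * (ennreal (exp (-\<alpha> * m * 2 powr p - 10 * b * m)) * Z_beta a b c p (\<alpha> * m) m)"
    by (simp add: ennreal_mult mult.assoc)
  also have "\<dots> \<le> Z_beta a b c p (\<alpha> * n) n"
    using order_trans[OF mult_left_mono[OF step] scale] by simp
  finally show ?thesis
    by (simp add: K_def n_def)
qed

lemma Z_ratio_ge:
  fixes b c p :: real
  assumes a: "a \<ge> 1" and b: "b > 0" and c: "c \<ge> 0" and p: "p \<ge> 1" and n: "n \<ge> 2"
  defines "\<alpha> \<equiv> real a * b * gamma_p p"
  shows "exp (-2 * (1 + a * b * n + c) - \<alpha> * (real n - 1) * 2 powr p - 10 * b * (real n - 1))
    \<le> Z a b c n p / Z a b c (n - 1) p"
proof -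
  obtain m where n_eq: "n = Suc m" and m: "m \<ge> 1"
    using n by (metis Suc_1 Suc_le_D Suc_le_mono)
  have \<alpha>: "\<alpha> > 0"
    using a b gamma_p_pos[OF p] by (simp add: \<alpha>_def)
  have "exp (-2 * (1 + a * b * Suc m + c) - \<alpha> * m * 2 powr p - 10 * b * m)
      \<le> enn2real (Z_beta a b c p (\<alpha> * Suc m) (Suc m)) / enn2real (Z_beta a b c p (\<alpha> * m) m)"
    using a b c p \<alpha> m
    by (intro le_enn2real_divide Z_beta_Suc_rescaled_ge Z_beta_pos Z_beta_finite) auto
  then show ?thesis
    by (simp add: Z_eq_Z_beta \<alpha>_def n_eq mult_ac)
qed

theorem mainTheorem7:
  fixes a :: nat and b c p :: real
  assumes "a \<ge> 1" and "b > 0" and "c \<ge> 0" and "p \<ge> 1"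
  shows "\<exists>c3 > 0. \<forall>n::nat. n \<ge> 2 \<longrightarrow>
           Z a b c n p / Z a b c (n - 1) p \<ge> exp (- c3 * real n)"
proof (intro exI conjI allI impI)
  define \<alpha> where "\<alpha> = real a * b * gamma_p p"
  have \<alpha>: "\<alpha> > 0"
    using assms gamma_p_pos[of p] by (simp add: \<alpha>_def)
  define c3 where "c3 = 2 + 2 * c + 2 * a * b + \<alpha> * 2 powr p + 10 * b"
  show "c3 > 0"
    using assms \<alpha> by (simp add: c3_def add_pos_nonneg)
  fix n :: nat
  assume n: "n \<ge> 2"
  have "(2 + 2 * c) * 1 \<le> (2 + 2 * c) * n" "\<alpha> * (real n - 1) * 2 powr p \<le> \<alpha> * n * 2 powr p"
    "10 * b * (real n - 1) \<le> 10 * b * n"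
    using assms \<alpha> n by (auto intro!: mult_left_mono mult_right_mono)
  then have "- c3 * n \<le> -2 * (1 + a * b * n + c) - \<alpha> * (real n - 1) * 2 powr p - 10 * b * (real n - 1)"
    by (simp add: c3_def algebra_simps)
  also have "exp \<dots> \<le> Z a b c n p / Z a b c (n - 1) p"
    unfolding \<alpha>_def using Z_ratio_ge[OF assms n] .
  finally show "exp (- c3 * real n) \<le> Z a b c n p / Z a b c (n - 1) p"
    by simp
qed

end
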